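(* There exists an absolute constant $c_3>0$ such that the following holds. Let $p>2$ be a prime and $g$ a primitive root modulo $p$. Let $a\ge0$, $r>0$, $N>0$ be integers with $\{a+r,a+2r,\dots,a+Nr\}\subset[1,p-1]$, and let $\mathcal{L}(g)=\{\log_g(a+jr)\colon 1\le j\le N\}$. Then for any $\delta>0$ and any subinterval of $[0,p-1]$ of length $M>0$ such that $MN>\frac{c_3}{\delta}p^{3/2}\log^2 p$, the number of elements of $\mathcal{L}(g)$ lying in that subinterval is at least $(1-\delta)\frac{MN}{p}$ and at most $(1+\delta)\frac{MN}{p}$.
   Context: For $x$ coprime to $p$, the discrete logarithm $\log_g x$ is the smallest integer $n\ge 0$ with $g^n\equiv x\pmod p$. $\log$ without subscript denotes the natural logarithm. *)

theory Defs
  imports "HOL-Number_Theory.Number_Theory"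
begin

definition dlog :: "nat \<Rightarrow> nat \<Rightarrow> nat \<Rightarrow> nat" where
  "dlog p g x = (LEAST n. [g ^ n = x] (mod p))"

end

theory Submission
  imports Defs "HOL-Analysis.Harmonic_Numbers" "HOL-Analysis.Complex_Transcendental"
begin

(* Expand the indicator of dlog x \<in> I in additive characters modulo p: with
   A_b = \<Sum>_{s \<in> I} e(b g^s / p) and B_b = \<Sum>_j e(-b (a + j r) / p),
     p \<cdot> #{j. dlog (a + j r) \<in> I} = |I| N + \<Sum>_{b = 1}^{p - 1} A_b B_b.
   Completing A_b with the characters of \<int>/(p - 1) writes it as an average of Gauss sums,
   each of modulus at most \<surd>p, which gives |A_b| = O(\<surd>p log p).  Each B_b is a geometric
   sum bounded by p / \<parallel>b r\<parallel>, so \<Sum>_b |B_b| = O(p log p).  Hence the count differs from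
   |I| N / p by O(\<surd>p log\<^sup>2 p), which the hypothesis M N > c\<^sub>3 p^{3/2} log\<^sup>2 p / \<delta> makes smaller
   than \<delta> M N / p. *)

section \<open>Roots of unity\<close>

definition unity_root :: "nat \<Rightarrow> int \<Rightarrow> complex" where
  "unity_root d x = cis (2 * pi * of_int x / of_nat d)"

lemma unity_root_add: "unity_root d (x + y) = unity_root d x * unity_root d y"
  by (simp add: unity_root_def cis_mult add_divide_distrib distrib_left)

lemma unity_root_0 [simp]: "unity_root d 0 = 1"
  by (simp add: unity_root_def)

lemma norm_unity_root [simp]: "norm (unity_root d x) = 1"
  by (simp add: unity_root_def)

lemma unity_root_uminus: "unity_root d (- x) = cnj (unity_root d x)"
  by (simp add: unity_root_def cis_cnj)

lemma unity_root_power: "unity_root d x ^ n = unity_root d (int n * x)"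
  unfolding unity_root_def Complex.DeMoivre by (simp add: algebra_simps)

lemma unity_root_multiple:
  assumes "d > 0" shows "unity_root d (int d * k) = 1"
proof -
  have "2 * pi * of_int (int d * k) / of_nat d = 2 * pi * of_int k" using assms by simp
  thus ?thesis unfolding unity_root_def by simp
qed

lemma unity_root_cong:
  assumes "d > 0" "[x = y] (mod int d)"
  shows "unity_root d x = unity_root d y"
proof -
  obtain k where "x = y + int d * k"
    using assms(2) by (metis cong_iff_lin cong_sym mult.commute)
  thus ?thesis using unity_root_multiple[OF assms(1)] by (simp add: unity_root_add)
qed

text \<open>The distance from \<open>c\<close> to the nearest multiple of \<open>d\<close>, i.e.\ \<open>d \<parallel>c/d\<parallel>\<close>.\<close>
definition mod_dist :: "nat \<Rightarrow> int \<Rightarrow> real" where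
  "mod_dist d c = real (min (nat (c mod int d)) (d - nat (c mod int d)))"

lemma mod_dist_pos:
  assumes "d > 0" "\<not> int d dvd c"
  shows "mod_dist d c > 0"
proof -
  have "c mod int d \<noteq> 0" "c mod int d \<ge> 0" "c mod int d < int d"
    using assms by (auto simp: dvd_eq_mod_eq_0)
  thus ?thesis unfolding mod_dist_def by auto
qed

lemma mod_dist_mod [simp]: "mod_dist d (c mod int d) = mod_dist d c"
  by (simp add: mod_dist_def)

lemma norm_1_minus_cis_double: "norm (1 - cis (2 * y)) = 2 * \<bar>sin y\<bar>"
proof -
  have "1 - cis (2 * y) = cis y * (cis (- y) - cis y)"
    by (simp add: algebra_simps cis_mult)
  also have "cis (- y) - cis y = - (2 * \<i> * complex_of_real (sin y))"
    by (simp add: complex_eq_iff)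
  finally show ?thesis by (simp add: norm_mult)
qed

lemma sin_ge_half:
  assumes "0 \<le> y" "y \<le> pi / 2"
  shows "y / 2 \<le> sin y"
proof -
  have "\<bar>sin y - (\<Sum>m<3. sin_coeff m * y ^ m)\<bar> \<le> inverse (fact 3) * \<bar>y\<bar> ^ 3"
    by (rule Maclaurin_sin_bound)
  moreover have "(\<Sum>m<3. sin_coeff m * y ^ m) = y"
    by (simp add: numeral_3_eq_3 sin_coeff_def)
  ultimately have "\<bar>sin y - y\<bar> \<le> y ^ 3 / 6" using assms by (simp add: fact_numeral)
  hence taylor: "y - y ^ 3 / 6 \<le> sin y" using abs_ge_minus_self[of "sin y - y"] by linarith
  have "pi \<le> 3.2" using pi_approx(2) by simp
  hence "y \<le> 1.6" using assms by linarith
  hence "y * y \<le> 1.6 * 1.6" using assms by (intro mult_mono) auto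
  hence "y * y \<le> 3" by simp
  hence "y ^ 3 \<le> 3 * y" using assms by (metis mult_right_mono power3_eq_cube mult.commute)
  thus ?thesis using taylor by linarith
qed

lemma norm_1_minus_unity_root_ge:
  assumes d: "d > 0" and c: "\<not> int d dvd c"
  shows "pi * mod_dist d c / d \<le> norm (1 - unity_root d c)"
proof -
  have small: "pi * n / d \<le> norm (1 - unity_root d n)" if n: "0 < n" "2 * n \<le> int d" for n
  proof -
    define y where "y = pi * n / d"
    have "unity_root d n = cis (2 * y)" by (simp add: unity_root_def y_def algebra_simps)
    hence "norm (1 - unity_root d n) = 2 * \<bar>sin y\<bar>" by (simp add: norm_1_minus_cis_double)
    moreover have "real_of_int n / d \<le> 1 / 2" using n d by (simp add: field_simps)
    hence "pi * (real_of_int n / d) \<le> pi * (1 / 2)" by (intro mult_left_mono) auto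
    hence "0 \<le> y" "y \<le> pi / 2" using n d by (auto simp: y_def)
    ultimately show ?thesis using sin_ge_half[of y] by (simp add: y_def)
  qed
  define m where "m = c mod int d"
  have m: "0 < m" "m < int d" using d c by (auto simp: m_def dvd_eq_mod_eq_0 order_le_neq_trans)
  have root: "unity_root d c = unity_root d m"
    by (rule unity_root_cong[OF d]) (simp add: m_def cong_def)
  show ?thesis
  proof (cases "2 * m \<le> int d")
    case True
    hence "mod_dist d c = m" using m by (simp add: mod_dist_def m_def[symmetric] min_def)
    thus ?thesis using small[OF m(1) True] root by simp
  next
    case False
    hence dist: "mod_dist d c = int d - m" using m by (simp add: mod_dist_def m_def[symmetric] min_def of_nat_diff)
    \<comment> \<open>\<open>d - m\<close> gives the conjugate root, at the same distance from \<open>1\<close>.\<close>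
    have "unity_root d (int d - m) = cnj (unity_root d c)"
      using unity_root_add[of d "int d" "- m"] unity_root_multiple[OF d, of 1]
      by (simp add: unity_root_uminus root)
    hence "norm (1 - unity_root d (int d - m)) = norm (1 - unity_root d c)"
      by (metis complex_cnj_diff complex_cnj_one complex_mod_cnj)
    thus ?thesis using small[of "int d - m"] False m dist by simp
  qed
qed

lemma unity_root_eq_1_iff:
  assumes d: "d > 0"
  shows "unity_root d c = 1 \<longleftrightarrow> int d dvd c"
proof
  assume root: "unity_root d c = 1"
  show "int d dvd c"
  proof (rule ccontr)
    assume c: "\<not> int d dvd c"
    have "0 < pi * mod_dist d c / d" using mod_dist_pos[OF d c] d by simp
    with norm_1_minus_unity_root_ge[OF d c] root show False by simp
  qed
qed (auto simp: unity_root_multiple[OF d] elim!: dvdE)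

lemma sum_unity_root:
  assumes d: "d > 0"
  shows "(\<Sum>b<d. unity_root d (int b * x)) = (if int d dvd x then of_nat d else 0)"
proof -
  define z where "z = unity_root d x"
  have powers: "unity_root d (int b * x) = z ^ b" for b by (simp add: z_def unity_root_power)
  show ?thesis
  proof (cases "int d dvd x")
    case True
    hence "z = 1" using unity_root_eq_1_iff[OF d] by (simp add: z_def)
    thus ?thesis using True by (simp add: powers)
  next
    case False
    hence "z \<noteq> 1" using unity_root_eq_1_iff[OF d] by (simp add: z_def)
    moreover have "z ^ d = 1" using powers[of d] unity_root_multiple[OF d, of x] by simp
    ultimately show ?thesis using False by (simp add: powers geometric_sum)
  qed
qed

lemma norm_sum_unity_root_interval_le:
  assumes d: "d > 0" and c: "\<not> int d dvd c"
  shows "norm (\<Sum>t\<in>{lo..<hi::nat}. unity_root d (c * int t)) \<le> d / mod_dist d c"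
proof (cases "lo \<le> hi")
  case True
  define z where "z = unity_root d c"
  define S where "S = (\<Sum>t\<in>{lo..<hi}. z ^ t)"
  have S: "S = (\<Sum>t\<in>{lo..<hi}. unity_root d (c * int t))"
    by (simp add: S_def z_def unity_root_power mult.commute)
  have dist: "pi * mod_dist d c / d \<le> norm (1 - z)"
    unfolding z_def by (rule norm_1_minus_unity_root_ge[OF d c])
  have pos: "0 < pi * mod_dist d c / d" using mod_dist_pos[OF d c] d by simp
  have "(1 - z) * S = (\<Sum>t\<in>{lo..<hi}. z ^ t - z ^ Suc t)"
    by (simp add: S_def sum_distrib_left algebra_simps)
  also have "\<dots> = z ^ lo - z ^ hi"
    using sum_Suc_diff'[OF True, of "\<lambda>t. z ^ t"] by (simp add: sum_subtractf) (metis minus_diff_eq)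
  finally have "norm ((1 - z) * S) \<le> 2"
    using norm_triangle_ineq4[of "z ^ lo" "z ^ hi"] by (simp add: z_def norm_power)
  hence "norm (1 - z) * norm S \<le> 2" by (simp add: norm_mult)
  hence "pi * mod_dist d c / d * norm S \<le> 2"
    using dist by (smt (verit) mult_right_mono norm_ge_zero)
  hence "norm S * (pi * mod_dist d c / d) \<le> 2" by (simp only: mult.commute)
  hence "norm S \<le> 2 / (pi * mod_dist d c / d)" using pos by (simp only: pos_le_divide_eq)
  also have "\<dots> \<le> d / mod_dist d c"
    using mod_dist_pos[OF d c] d pi_gt3 by (simp add: field_simps)
  finally show ?thesis by (simp add: S)
next
  case False
  thus ?thesis using mod_dist_pos[OF d c] by simp
qed

lemma harm_le_1_plus_ln: "n \<ge> 1 \<Longrightarrow> (harm n :: real) \<le> 1 + ln n"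
  using euler_mascheroni_sequence_decreasing[of 1 n] by (simp add: harm_def)

lemma sum_inverse_mod_dist_le:
  assumes "d \<ge> 2"
  shows "(\<Sum>c\<in>{1..<d}. d / mod_dist d (int c)) \<le> 2 * real d * (1 + ln d)"
proof -
  have dist: "mod_dist d (int c) = min c (d - c)" if "c \<in> {1..<d}" for c
    using that by (simp add: mod_dist_def nat_mod_as_int[symmetric] flip: of_nat_mod)
  have "(\<Sum>c\<in>{1..<d}. d / mod_dist d (int c)) \<le> (\<Sum>c\<in>{1..<d}. d * (1 / c + 1 / (d - c)))"
  proof (rule sum_mono)
    fix c assume c: "c \<in> {1..<d}"
    have "1 / real (min c (d - c)) \<le> 1 / c + 1 / (d - c)"
      using c by (cases "c \<le> d - c") (auto simp: min_def)
    thus "d / mod_dist d (int c) \<le> d * (1 / c + 1 / (d - c))"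
      using dist[OF c] by (simp add: divide_inverse mult_left_mono)
  qed
  also have "\<dots> = d * ((\<Sum>c\<in>{1..<d}. 1 / c) + (\<Sum>c\<in>{1..<d}. 1 / (d - c)))"
    by (simp only: distrib_left sum_distrib_left sum.distrib)
  also have "(\<Sum>c\<in>{1..<d}. 1 / real (d - c)) = (\<Sum>c\<in>{1..<d}. 1 / c)"
    by (rule sum.reindex_bij_witness[of _ "\<lambda>c. d - c" "\<lambda>c. d - c"]) auto
  also have "(\<Sum>c\<in>{1..<d}. 1 / real c) = harm (d - 1)"
    unfolding harm_def using assms by (intro sum.cong) (auto simp: divide_inverse)
  also have "\<dots> \<le> 1 + ln (d - 1)" using harm_le_1_plus_ln[of "d - 1"] assms by simp
  also have "\<dots> \<le> 1 + ln d" using assms by simp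
  finally show ?thesis using assms by (simp add: mult_left_mono algebra_simps)
qed

text \<open>Multiplication by a unit permutes the nonzero residues, so the same bound holds along
  \<open>c r\<close>.\<close>
lemma sum_inverse_mod_dist_mult_le:
  assumes d: "d \<ge> 2" and r: "coprime (int d) r"
  shows "(\<Sum>c\<in>{1..<d}. d / mod_dist d (int c * r)) \<le> 2 * real d * (1 + ln d)"
proof -
  define \<phi> where "\<phi> c = nat ((int c * r) mod int d)" for c
  have dvd_iff: "int d dvd int c * r \<longleftrightarrow> int d dvd int c" for c
    using r by (simp add: coprime_dvd_mult_left_iff)
  have into: "\<phi> ` {1..<d} \<subseteq> {1..<d}"
  proof
    fix y assume "y \<in> \<phi> ` {1..<d}"
    then obtain c where c: "c \<in> {1..<d}" "y = \<phi> c" by auto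
    define m where "m = (int c * r) mod int d"
    have "m \<noteq> 0" using dvd_iff[of c] c by (auto simp: m_def dvd_eq_mod_eq_0 dest: zdvd_imp_le)
    moreover have "0 \<le> m" "m < int d" using d by (auto simp: m_def)
    ultimately have "1 \<le> nat m" "nat m < d" by auto
    thus "y \<in> {1..<d}" using c by (simp add: \<phi>_def m_def)
  qed
  have inj: "inj_on \<phi> {1..<d}"
  proof
    fix c c' assume c: "c \<in> {1..<d}" "c' \<in> {1..<d}" and "\<phi> c = \<phi> c'"
    hence "(int c * r) mod int d = (int c' * r) mod int d"
      using d unfolding \<phi>_def by (subst (asm) nat_eq_iff2) auto
    hence "int d dvd (int c - int c') * r" by (simp add: mod_eq_dvd_iff left_diff_distrib)
    hence "int d dvd (int c - int c')" using r by (simp add: coprime_dvd_mult_left_iff)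
    hence "int c mod int d = int c' mod int d" by (simp add: mod_eq_dvd_iff)
    thus "c = c'" using c by simp
  qed
  have perm: "\<phi> ` {1..<d} = {1..<d}" by (rule endo_inj_surj[OF _ into inj]) simp
  have "(\<Sum>c\<in>{1..<d}. d / mod_dist d (int c * r)) = (\<Sum>c\<in>{1..<d}. d / mod_dist d (int (\<phi> c)))"
    using d by (intro sum.cong) (auto simp: \<phi>_def)
  also have "\<dots> = (\<Sum>c\<in>\<phi> ` {1..<d}. d / mod_dist d (int c))"
    by (rule sum.reindex[OF inj, symmetric, unfolded comp_def])
  finally show ?thesis using perm sum_inverse_mod_dist_le[OF d] by simp
qed

section \<open>Discrete logarithms\<close>

lemma primroot_power_bij:
  assumes p: "prime p" and g: "residue_primroot p g"
  shows "bij_betw (\<lambda>i. g ^ i mod p) {..<p - 1} {0<..<p}"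
  using residue_primroot_is_generator[of p g] g prime_gt_1_nat[OF p]
  by (simp add: totient_prime[OF p] totatives_prime[OF p])

lemma primroot_ord:
  assumes p: "prime p" and g: "residue_primroot p g"
  shows "ord p g = p - 1"
  using g p by (simp add: residue_primroot_def totient_prime)

lemma primroot_power_mod:
  assumes p: "prime p" and g: "residue_primroot p g"
  shows "[g ^ n = g ^ (n mod (p - 1))] (mod p)"
proof -
  have "[n = n mod (p - 1)] (mod ord p g)" using primroot_ord[OF p g] by (simp add: cong_def)
  thus ?thesis using g by (simp add: residue_primroot_def order_divides_expdiff)
qed

lemma primroot_power_cong_iff:
  assumes p: "prime p" and g: "residue_primroot p g" and "s < p - 1" "t < p - 1"
  shows "[g ^ s = g ^ t] (mod p) \<longleftrightarrow> s = t"
proof -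
  have "[g ^ s = g ^ t] (mod p) \<longleftrightarrow> [s = t] (mod p - 1)"
    using g primroot_ord[OF p g] by (simp add: residue_primroot_def order_divides_expdiff)
  thus ?thesis using assms by (simp add: cong_def)
qed

lemma primroot_power_cong_1_iff:
  assumes p: "prime p" and g: "residue_primroot p g" and t: "t < p - 1"
  shows "[g ^ t = 1] (mod p) \<longleftrightarrow> t = 0"
  using primroot_power_cong_iff[OF p g t, of 0] t by simp

lemma dlog_unique:
  assumes p: "prime p" and g: "residue_primroot p g"
    and s: "s < p - 1" and x: "[g ^ s = x] (mod p)"
  shows "dlog p g x = s"
  unfolding dlog_def
proof (rule Least_equality)
  show "[g ^ s = x] (mod p)" by (rule x)
next
  fix t assume t: "[g ^ t = x] (mod p)"
  show "s \<le> t"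
  proof (rule ccontr)
    assume "\<not> s \<le> t"
    moreover have "[g ^ t = g ^ s] (mod p)" using t x by (metis cong_sym cong_trans)
    ultimately show False using primroot_power_cong_iff[OF p g _ s, of t] s by simp
  qed
qed

lemma dlog_less_and_cong:
  assumes p: "prime p" and g: "residue_primroot p g" and x: "0 < x" "x < p"
  shows "dlog p g x < p - 1 \<and> [g ^ dlog p g x = x] (mod p)"
proof -
  have "x \<in> (\<lambda>i. g ^ i mod p) ` {..<p - 1}"
    using primroot_power_bij[OF p g] x by (simp add: bij_betw_def)
  then obtain i where i: "i < p - 1" "[g ^ i = x] (mod p)"
    using x by (auto simp: cong_def)
  thus ?thesis using dlog_unique[OF p g i] by simp
qed

lemma dlog_eq_iff_cong:
  assumes p: "prime p" and g: "residue_primroot p g" and x: "0 < x" "x < p" and s: "s < p - 1"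
  shows "dlog p g x = s \<longleftrightarrow> [g ^ s = x] (mod p)"
  using dlog_unique[OF p g s] dlog_less_and_cong[OF p g x] by auto

section \<open>Gauss sums\<close>

lemma sum_unity_root_primroot_powers:
  assumes p: "prime p" and g: "residue_primroot p g"
  shows "(\<Sum>s<p - 1. unity_root p (c * int (g ^ s))) = (if int p dvd c then of_nat p else 0) - 1"
proof -
  have pp: "p > 0" using prime_gt_0_nat[OF p] .
  have "(\<Sum>s<p - 1. unity_root p (c * int (g ^ s))) = (\<Sum>s<p - 1. unity_root p (c * int (g ^ s mod p)))"
    by (intro sum.cong refl unity_root_cong[OF pp]) (simp add: cong_def of_nat_mod mod_mult_right_eq)
  also have "\<dots> = (\<Sum>y\<in>{0<..<p}. unity_root p (c * int y))"
    by (rule sum.reindex_bij_betw[OF primroot_power_bij[OF p g]])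
  also have "\<dots> = (\<Sum>y<p. unity_root p (int y * c)) - 1"
  proof -
    have "{..<p} = insert 0 {0<..<p}" using pp by auto
    thus ?thesis by (simp add: mult.commute)
  qed
  also have "\<dots> = (if int p dvd c then of_nat p else 0) - 1" by (simp add: sum_unity_root[OF pp])
  finally show ?thesis .
qed

lemma sum_unity_root_primroot_powers_diff:
  assumes p: "prime p" and g: "residue_primroot p g" and b: "\<not> int p dvd b" and t: "t < p - 1"
  shows "(\<Sum>s<p - 1. unity_root p (b * (int (g ^ t) - 1) * int (g ^ s))) = (if t = 0 then of_nat p else 0) - 1"
proof -
  have "int p dvd b * (int (g ^ t) - 1) \<longleftrightarrow> [g ^ t = 1] (mod p)"
    using b p by (simp add: prime_dvd_mult_iff cong_iff_dvd_diff flip: cong_int_iff)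
  also have "\<dots> \<longleftrightarrow> t = 0" by (rule primroot_power_cong_1_iff[OF p g t])
  finally show ?thesis using sum_unity_root_primroot_powers[OF p g, of "b * (int (g ^ t) - 1)"] by simp
qed

text \<open>The Gauss sum of the multiplicative character \<open>g\<^sup>s \<mapsto> e(k s / (p - 1))\<close> and the additive
  character \<open>x \<mapsto> e(b x / p)\<close>.\<close>
definition gauss_sum :: "nat \<Rightarrow> nat \<Rightarrow> int \<Rightarrow> int \<Rightarrow> complex" where
  "gauss_sum p g k b = (\<Sum>s<p - 1. unity_root (p - 1) (k * int s) * unity_root p (b * int (g ^ s)))"

lemma bij_betw_add_mod:
  fixes q s :: nat
  assumes "q > 0"
  shows "bij_betw (\<lambda>t. (s + t) mod q) {..<q} {..<q}"
proof -
  have inj: "inj_on (\<lambda>t. (s + t) mod q) {..<q}"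
  proof
    fix t t' assume t: "t \<in> {..<q}" "t' \<in> {..<q}" and "(s + t) mod q = (s + t') mod q"
    hence "[s + t = s + t'] (mod q)" by (simp add: cong_def)
    hence "[t = t'] (mod q)" by (simp add: cong_add_lcancel_nat)
    thus "t = t'" using t by (simp add: cong_def)
  qed
  have "(\<lambda>t. (s + t) mod q) ` {..<q} = {..<q}"
    by (rule endo_inj_surj[OF _ _ inj]) (use assms in auto)
  thus ?thesis using inj by (simp add: bij_betw_def)
qed

lemma gauss_sum_summand_shift:
  assumes p: "prime p" and g: "residue_primroot p g" and q: "q = p - 1"
  shows "unity_root q (k * int ((s + t) mod q)) * unity_root p (b * int (g ^ ((s + t) mod q))) *
           cnj (unity_root q (k * int s) * unity_root p (b * int (g ^ s)))
         = unity_root q (k * int t) * unity_root p (b * (int (g ^ t) - 1) * int (g ^ s))"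
proof -
  have pp: "p > 0" and qp: "q > 0" using prime_gt_1_nat[OF p] q by auto
  have shift_k: "unity_root q (k * int ((s + t) mod q)) = unity_root q (k * int s + k * int t)"
    by (rule unity_root_cong[OF qp]) (simp add: cong_def of_nat_mod mod_mult_right_eq algebra_simps)
  have "[int (g ^ ((s + t) mod q)) = int (g ^ s) * int (g ^ t)] (mod int p)"
    using primroot_power_mod[OF p g, of "s + t"] q
    by (simp add: cong_sym power_add flip: cong_int_iff)
  hence shift_b: "unity_root p (b * int (g ^ ((s + t) mod q))) = unity_root p (b * (int (g ^ s) * int (g ^ t)))"
    by (intro unity_root_cong[OF pp] cong_scalar_left)
  have k: "unity_root q (k * int s + k * int t) * unity_root q (- (k * int s)) = unity_root q (k * int t)"
    by (simp add: unity_root_add[symmetric])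
  have b: "unity_root p (b * (int (g ^ s) * int (g ^ t))) * unity_root p (- (b * int (g ^ s)))
             = unity_root p (b * (int (g ^ t) - 1) * int (g ^ s))"
    by (simp add: unity_root_add[symmetric] algebra_simps)
  show ?thesis
    unfolding shift_k shift_b complex_cnj_mult unity_root_uminus[symmetric] k[symmetric] b[symmetric]
    by (simp only: mult_ac)
qed

lemma gauss_sum_mult_cnj:
  assumes p: "prime p" and g: "residue_primroot p g" and b: "\<not> int p dvd b"
  shows "gauss_sum p g k b * cnj (gauss_sum p g k b)
           = of_nat p - (if int (p - 1) dvd k then of_nat (p - 1) else 0)"
proof -
  define q where "q = p - 1"
  have qp: "q > 0" using prime_gt_1_nat[OF p] q_def by simp
  define f where "f s = unity_root q (k * int s) * unity_root p (b * int (g ^ s))" for s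
  have "gauss_sum p g k b * cnj (gauss_sum p g k b) = (\<Sum>s<q. f s) * (\<Sum>s'<q. cnj (f s'))"
    by (simp add: gauss_sum_def f_def q_def)
  also have "\<dots> = (\<Sum>s'<q. \<Sum>s<q. f s * cnj (f s'))"
    by (subst sum_product) (rule sum.swap)
  \<comment> \<open>Substitute \<open>s = s' + t\<close> in the exponent group \<open>\<int>/(p - 1)\<close>.\<close>
  also have "\<dots> = (\<Sum>s'<q. \<Sum>t<q. unity_root q (k * int t) * unity_root p (b * (int (g ^ t) - 1) * int (g ^ s')))"
  proof (rule sum.cong[OF refl])
    fix s'
    have "(\<Sum>s<q. f s * cnj (f s')) = (\<Sum>t<q. f ((s' + t) mod q) * cnj (f s'))"
      by (rule sum.reindex_bij_betw[OF bij_betw_add_mod[OF qp], symmetric])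
    thus "(\<Sum>s<q. f s * cnj (f s')) =
        (\<Sum>t<q. unity_root q (k * int t) * unity_root p (b * (int (g ^ t) - 1) * int (g ^ s')))"
      unfolding f_def gauss_sum_summand_shift[OF p g q_def] .
  qed
  also have "\<dots> = (\<Sum>t<q. unity_root q (k * int t) *
                      (\<Sum>s'<q. unity_root p (b * (int (g ^ t) - 1) * int (g ^ s'))))"
    by (subst sum.swap) (simp add: sum_distrib_left)
  also have "\<dots> = (\<Sum>t<q. unity_root q (k * int t) * ((if t = 0 then of_nat p else 0) - 1))"
  proof (rule sum.cong[OF refl])
    fix t assume "t \<in> {..<q}"
    thus "unity_root q (k * int t) * (\<Sum>s'<q. unity_root p (b * (int (g ^ t) - 1) * int (g ^ s'))) =
          unity_root q (k * int t) * ((if t = 0 then of_nat p else 0) - 1)"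
      using sum_unity_root_primroot_powers_diff[OF p g b, of t] by (simp add: q_def)
  qed
  also have "\<dots> = (\<Sum>t<q. (if t = 0 then of_nat p else 0) - unity_root q (int t * k))"
    by (intro sum.cong refl) (auto simp: algebra_simps)
  also have "\<dots> = of_nat p - (\<Sum>t<q. unity_root q (int t * k))"
    using qp by (simp add: sum_subtractf)
  also have "\<dots> = of_nat p - (if int q dvd k then of_nat q else 0)" by (simp add: sum_unity_root[OF qp])
  finally show ?thesis by (simp add: q_def)
qed

lemma norm_gauss_sum_le:
  assumes p: "prime p" and g: "residue_primroot p g" and b: "\<not> int p dvd b"
  shows "norm (gauss_sum p g k b) \<le> sqrt p"
proof -
  have "complex_of_real ((norm (gauss_sum p g k b))\<^sup>2)
          = of_nat p - (if int (p - 1) dvd k then of_nat (p - 1) else 0)"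
    by (simp only: complex_norm_square gauss_sum_mult_cnj[OF p g b])
  hence "(norm (gauss_sum p g k b))\<^sup>2 = real p - (if int (p - 1) dvd k then real (p - 1) else 0)"
    by (simp add: complex_eq_iff split: if_splits)
  hence "(norm (gauss_sum p g k b))\<^sup>2 \<le> real p" by (simp split: if_splits)
  thus ?thesis by (simp add: real_le_rsqrt)
qed

section \<open>Incomplete sums over exponents\<close>

lemma indicator_eq_sum_unity_root:
  assumes q: "q > 0" and s: "s < q" and I: "I \<subseteq> {..<q}"
  shows "(if s \<in> I then 1 else 0 :: complex) =
         (\<Sum>k<q. \<Sum>s'\<in>I. unity_root q (int k * int s) * unity_root q (- (int k * int s'))) / of_nat q"
proof -
  have "unity_root q (int k * int s) * unity_root q (- (int k * int s')) =
          unity_root q (int k * (int s - int s'))" for k s'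
    by (simp only: diff_conv_add_uminus distrib_left mult_minus_right unity_root_add)
  hence "(\<Sum>k<q. \<Sum>s'\<in>I. unity_root q (int k * int s) * unity_root q (- (int k * int s')))
        = (\<Sum>s'\<in>I. \<Sum>k<q. unity_root q (int k * (int s - int s')))"
    by (simp only:) (rule sum.swap)
  also have "\<dots> = (\<Sum>s'\<in>I. if s' = s then of_nat q else 0)"
  proof (rule sum.cong[OF refl])
    fix s' assume "s' \<in> I"
    hence s': "s' < q" using I by auto
    have "int q dvd (int s - int s') \<longleftrightarrow> s' = s"
    proof
      assume "int q dvd (int s - int s')"
      hence "[s = s'] (mod q)" by (simp add: cong_iff_dvd_diff flip: cong_int_iff)
      thus "s' = s" using s s' by (simp add: cong_def)
    qed simp
    thus "(\<Sum>k<q. unity_root q (int k * (int s - int s'))) = (if s' = s then of_nat q else 0)"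
      by (simp add: sum_unity_root[OF q])
  qed
  also have "\<dots> = (if s \<in> I then of_nat q else 0)"
    using finite_subset[OF I] by (simp add: sum.delta')
  finally show ?thesis using q by simp
qed

lemma sum_primroot_powers_eq_gauss_sums:
  assumes p: "prime p" and I: "I \<subseteq> {..<p - 1}"
  shows "(\<Sum>s\<in>I. unity_root p (b * int (g ^ s))) =
         (\<Sum>k<p - 1. (\<Sum>s\<in>I. unity_root (p - 1) (- (int k * int s))) * gauss_sum p g (int k) b)
           / of_nat (p - 1)"
proof -
  define q where "q = p - 1"
  define e where "e s = unity_root p (b * int (g ^ s))" for s
  define T where "T k s s' = unity_root q (int k * int s) * unity_root q (- (int k * int s')) * e s"
    for k s s'
  have q: "q > 0" using prime_gt_1_nat[OF p] by (simp add: q_def)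
  have "(\<Sum>s<q. (if s \<in> I then 1 else 0) * e s) = (\<Sum>s<q. if s \<in> I then e s else 0)"
    by (intro sum.cong) auto
  also have "\<dots> = (\<Sum>s\<in>I. e s)"
    using I by (simp add: sum.inter_restrict[symmetric] Int_absorb1 q_def)
  finally have "(\<Sum>s\<in>I. e s) = (\<Sum>s<q. (if s \<in> I then 1 else 0) * e s)" ..
  also have "\<dots> = (\<Sum>s<q. (\<Sum>k<q. \<Sum>s'\<in>I. T k s s') / of_nat q)"
    by (intro sum.cong refl, subst indicator_eq_sum_unity_root[OF q _ I[folded q_def]])
       (auto simp: T_def sum_distrib_right)
  also have "\<dots> = (\<Sum>k<q. \<Sum>s'\<in>I. \<Sum>s<q. T k s s') / of_nat q"
  proof -
    have "(\<Sum>s<q. \<Sum>k<q. \<Sum>s'\<in>I. T k s s') = (\<Sum>k<q. \<Sum>s<q. \<Sum>s'\<in>I. T k s s')"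
      by (rule sum.swap)
    also have "\<dots> = (\<Sum>k<q. \<Sum>s'\<in>I. \<Sum>s<q. T k s s')"
      by (rule sum.cong[OF refl], rule sum.swap)
    finally show ?thesis by (simp only: sum_divide_distrib[symmetric])
  qed
  also have "\<dots> = (\<Sum>k<q. (\<Sum>s\<in>I. unity_root q (- (int k * int s))) * gauss_sum p g (int k) b) / of_nat q"
    by (simp add: T_def gauss_sum_def e_def q_def sum_product mult_ac)
  finally show ?thesis by (simp add: e_def q_def)
qed

lemma sum_norm_sum_unity_root_interval_le:
  assumes q: "q \<ge> 2" and hi: "hi \<le> q"
  shows "(\<Sum>k<q. norm (\<Sum>s\<in>{lo..<hi}. unity_root q (- (int k * int s)))) \<le> q + 2 * real q * (1 + ln q)"
proof -
  define C where "C k = (\<Sum>s\<in>{lo..<hi}. unity_root q (- (int k * int s)))" for k :: nat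
  have "norm (C 0) \<le> q"
    using hi by (simp add: C_def)
  moreover have "(\<Sum>k\<in>{1..<q}. norm (C k)) \<le> (\<Sum>k\<in>{1..<q}. q / mod_dist q (int k * -1))"
  proof (rule sum_mono)
    fix k assume "k \<in> {1..<q}"
    hence "\<not> int q dvd int k * -1" by (auto dest: zdvd_imp_le)
    from norm_sum_unity_root_interval_le[OF _ this, of lo hi] q
    show "norm (C k) \<le> q / mod_dist q (int k * -1)" by (simp add: C_def)
  qed
  moreover have "(\<Sum>k\<in>{1..<q}. q / mod_dist q (int k * -1)) \<le> 2 * real q * (1 + ln q)"
    by (rule sum_inverse_mod_dist_mult_le[OF q]) simp
  moreover have "{..<q} = insert 0 {1..<q}" using q by auto
  ultimately show ?thesis by (simp add: C_def)
qed

lemma norm_sum_primroot_powers_interval_le: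
  assumes p: "prime p" and p2: "p > 2" and g: "residue_primroot p g"
    and b: "\<not> int p dvd b" and hi: "hi \<le> p - 1"
  shows "norm (\<Sum>s\<in>{lo..<hi}. unity_root p (b * int (g ^ s))) \<le> sqrt p * (3 + 2 * ln p)"
proof -
  define q where "q = p - 1"
  define C where "C k = (\<Sum>s\<in>{lo..<hi}. unity_root q (- (int k * int s)))" for k :: nat
  have q: "q \<ge> 2" using p2 by (simp add: q_def)
  have "norm (\<Sum>s\<in>{lo..<hi}. unity_root p (b * int (g ^ s))) = norm (\<Sum>k<q. C k * gauss_sum p g (int k) b) / q"
    using sum_primroot_powers_eq_gauss_sums[OF p, of "{lo..<hi}" b g] hi
    by (simp add: C_def q_def norm_divide subset_eq)
  also have "\<dots> \<le> (\<Sum>k<q. norm (C k) * sqrt p) / q"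
    by (intro divide_right_mono order_trans[OF norm_sum sum_mono])
       (simp_all add: norm_mult norm_gauss_sum_le[OF p g b] mult_left_mono)
  also have "\<dots> = (\<Sum>k<q. norm (C k)) * sqrt p / q" by (simp add: sum_distrib_right)
  also have "\<dots> \<le> (q + 2 * real q * (1 + ln q)) * sqrt p / q"
    using sum_norm_sum_unity_root_interval_le[OF q, of hi lo] hi
    by (intro divide_right_mono mult_right_mono) (simp_all add: C_def q_def)
  also have "\<dots> = sqrt p * (3 + 2 * ln q)" using q by (simp add: field_simps)
  also have "\<dots> \<le> sqrt p * (3 + 2 * ln p)" using q by (intro mult_left_mono) (auto simp: q_def)
  finally show ?thesis .
qed

lemma sum_norm_sum_unity_root_progression_le:
  assumes p: "prime p" and r: "0 < r" "r < p"
  shows "(\<Sum>b\<in>{1..<p}. norm (\<Sum>j\<in>{1..N}. unity_root p (- (int b * int (a + j * r)))))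
           \<le> 2 * real p * (1 + ln p)"
proof -
  have p2: "p \<ge> 2" and pp: "p > 0" using prime_ge_2_nat[OF p] by auto
  have "coprime p r" using p r by (simp add: prime_imp_coprime nat_dvd_not_less)
  hence cop: "coprime (int p) (- int r)" by simp
  have "(\<Sum>b\<in>{1..<p}. norm (\<Sum>j\<in>{1..N}. unity_root p (- (int b * int (a + j * r)))))
        \<le> (\<Sum>b\<in>{1..<p}. p / mod_dist p (int b * - int r))"
  proof (rule sum_mono)
    fix b assume b: "b \<in> {1..<p}"
    have "\<not> int p dvd int b * - int r"
      using cop b by (simp add: coprime_dvd_mult_left_iff) (auto dest: zdvd_imp_le)
    hence "norm (\<Sum>j\<in>{1..<N + 1}. unity_root p ((int b * - int r) * int j)) \<le> p / mod_dist p (int b * - int r)"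
      by (rule norm_sum_unity_root_interval_le[OF pp])
    moreover have "(\<Sum>j\<in>{1..N}. unity_root p (- (int b * int (a + j * r))))
          = unity_root p (- (int b * int a)) * (\<Sum>j\<in>{1..<N + 1}. unity_root p ((int b * - int r) * int j))"
      by (simp add: sum_distrib_left unity_root_add[symmetric] algebra_simps atLeastLessThanSuc_atLeastAtMost)
    ultimately show "norm (\<Sum>j\<in>{1..N}. unity_root p (- (int b * int (a + j * r)))) \<le> p / mod_dist p (int b * - int r)"
      by (simp only: norm_mult norm_unity_root mult_1_left)
  qed
  also have "\<dots> \<le> 2 * real p * (1 + ln p)" by (rule sum_inverse_mod_dist_mult_le[OF p2 cop])
  finally show ?thesis .
qed

section \<open>Logarithms of an arithmetic progression\<close>

lemma indicator_dlog_eq_sum_unity_root: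
  assumes p: "prime p" and g: "residue_primroot p g" and x: "0 < x" "x < p"
    and I: "I \<subseteq> {..<p - 1}"
  shows "(\<Sum>s\<in>I. \<Sum>b<p. unity_root p (int b * int (g ^ s)) * unity_root p (- (int b * int x)))
           = (if dlog p g x \<in> I then of_nat p else 0)"
proof -
  have pp: "p > 0" using prime_gt_0_nat[OF p] .
  have "(\<Sum>s\<in>I. \<Sum>b<p. unity_root p (int b * int (g ^ s)) * unity_root p (- (int b * int x)))
        = (\<Sum>s\<in>I. if s = dlog p g x then of_nat p else 0)"
  proof (rule sum.cong[OF refl])
    fix s assume "s \<in> I"
    hence "int p dvd (int (g ^ s) - int x) \<longleftrightarrow> s = dlog p g x"
      using I dlog_eq_iff_cong[OF p g x, of s]
      by (auto simp: cong_iff_dvd_diff simp flip: cong_int_iff)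
    moreover have "unity_root p (int b * int (g ^ s)) * unity_root p (- (int b * int x))
                     = unity_root p (int b * (int (g ^ s) - int x))" for b
      by (simp only: diff_conv_add_uminus distrib_left mult_minus_right unity_root_add)
    ultimately show "(\<Sum>b<p. unity_root p (int b * int (g ^ s)) * unity_root p (- (int b * int x)))
                     = (if s = dlog p g x then of_nat p else 0)"
      by (simp add: sum_unity_root[OF pp])
  qed
  also have "\<dots> = (if dlog p g x \<in> I then of_nat p else 0)"
    using finite_subset[OF I] by (simp add: sum.delta')
  finally show ?thesis .
qed

lemma card_dlog_in_fourier_expansion:
  assumes p: "prime p" and g: "residue_primroot p g" and J: "finite J"
    and x: "\<And>j. j \<in> J \<Longrightarrow> 0 < x j \<and> x j < p" and I: "I \<subseteq> {..<p - 1}"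
  shows "of_nat p * of_nat (card {j\<in>J. dlog p g (x j) \<in> I})
         = of_nat (card I) * of_nat (card J) +
           (\<Sum>b\<in>{1..<p}. (\<Sum>s\<in>I. unity_root p (int b * int (g ^ s))) *
                          (\<Sum>j\<in>J. unity_root p (- (int b * int (x j)))))"
proof -
  define T where "T j s b = unity_root p (int b * int (g ^ s)) * unity_root p (- (int b * int (x j)))"
    for j s b
  have "of_nat p * of_nat (card {j\<in>J. dlog p g (x j) \<in> I})
        = (\<Sum>j\<in>J. if dlog p g (x j) \<in> I then of_nat p else (0::complex))"
    using J by (simp add: sum.If_cases Int_def)
  also have "\<dots> = (\<Sum>j\<in>J. \<Sum>s\<in>I. \<Sum>b<p. T j s b)"
    using indicator_dlog_eq_sum_unity_root[OF p g _ _ I] x by (simp add: T_def)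
  also have "\<dots> = (\<Sum>b<p. \<Sum>j\<in>J. \<Sum>s\<in>I. T j s b)"
  proof -
    have "(\<Sum>j\<in>J. \<Sum>s\<in>I. \<Sum>b<p. T j s b) = (\<Sum>j\<in>J. \<Sum>b<p. \<Sum>s\<in>I. T j s b)"
      by (rule sum.cong[OF refl], rule sum.swap)
    also have "\<dots> = (\<Sum>b<p. \<Sum>j\<in>J. \<Sum>s\<in>I. T j s b)"
      by (rule sum.swap)
    finally show ?thesis .
  qed
  also have "\<dots> = (\<Sum>b<p. (\<Sum>s\<in>I. unity_root p (int b * int (g ^ s))) *
                            (\<Sum>j\<in>J. unity_root p (- (int b * int (x j)))))"
    by (rule sum.cong[OF refl]) (simp add: T_def sum_product, rule sum.swap)
  also have "{..<p} = insert 0 {1..<p}" using prime_gt_0_nat[OF p] by auto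
  finally show ?thesis by simp
qed

lemma dlog_progression_interval_discrepancy:
  fixes a r N lo hi :: nat
  assumes p: "prime p" and p2: "p > 2" and g: "residue_primroot p g" and r: "0 < r" "r < p"
    and ap: "\<forall>j\<in>{1..N}. 0 < a + j * r \<and> a + j * r < p" and hi: "hi \<le> p - 1"
  shows "\<bar>real p * card {j\<in>{1..N}. dlog p g (a + j * r) \<in> {lo..<hi}} - real (hi - lo) * N\<bar>
           \<le> sqrt p * (3 + 2 * ln p) * (2 * real p * (1 + ln p))"
proof -
  define A where "A b = (\<Sum>s\<in>{lo..<hi}. unity_root p (int b * int (g ^ s)))" for b :: nat
  define B where "B b = (\<Sum>j\<in>{1..N}. unity_root p (- (int b * int (a + j * r))))" for b :: nat
  define S where "S = (\<Sum>b\<in>{1..<p}. A b * B b)"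
  have "of_nat p * of_nat (card {j\<in>{1..N}. dlog p g (a + j * r) \<in> {lo..<hi}})
          = of_nat (hi - lo) * of_nat N + S"
    using card_dlog_in_fourier_expansion[OF p g, of "{1..N}" "\<lambda>j. a + j * r" "{lo..<hi}"] ap hi
    by (simp add: A_def B_def S_def subset_eq)
  hence "S = complex_of_real (real p * card {j\<in>{1..N}. dlog p g (a + j * r) \<in> {lo..<hi}} - real (hi - lo) * N)"
    by simp
  hence "\<bar>real p * card {j\<in>{1..N}. dlog p g (a + j * r) \<in> {lo..<hi}} - real (hi - lo) * N\<bar> = norm S"
    by (simp only: norm_of_real)
  also have "norm S \<le> (\<Sum>b\<in>{1..<p}. norm (A b) * norm (B b))"
    unfolding S_def by (rule order_trans[OF norm_sum]) (simp add: norm_mult)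
  also have "\<dots> \<le> (\<Sum>b\<in>{1..<p}. sqrt p * (3 + 2 * ln p) * norm (B b))"
  proof (intro sum_mono mult_right_mono)
    fix b assume "b \<in> {1..<p}"
    hence "\<not> int p dvd int b" by (auto dest: zdvd_imp_le)
    thus "norm (A b) \<le> sqrt p * (3 + 2 * ln p)"
      unfolding A_def by (rule norm_sum_primroot_powers_interval_le[OF p p2 g _ hi])
  qed simp
  also have "\<dots> = sqrt p * (3 + 2 * ln p) * (\<Sum>b\<in>{1..<p}. norm (B b))"
    by (simp add: sum_distrib_left)
  also have "\<dots> \<le> sqrt p * (3 + 2 * ln p) * (2 * real p * (1 + ln p))"
    unfolding B_def using p2
    by (intro mult_left_mono sum_norm_sum_unity_root_progression_le[OF p r]) auto
  finally show ?thesis .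
qed

lemma inj_on_dlog_progression:
  assumes p: "prime p" and g: "residue_primroot p g" and r: "r > 0"
    and ap: "\<forall>j\<in>J. 0 < a + j * r \<and> a + j * r < p"
  shows "inj_on (\<lambda>j. dlog p g (a + j * r)) J"
proof
  fix j j' assume j: "j \<in> J" "j' \<in> J" and eq: "dlog p g (a + j * r) = dlog p g (a + j' * r)"
  have "[g ^ dlog p g (a + j * r) = a + j * r] (mod p)" "[g ^ dlog p g (a + j' * r) = a + j' * r] (mod p)"
    using dlog_less_and_cong[OF p g] ap j by auto
  hence "[a + j * r = a + j' * r] (mod p)"
    unfolding eq by (blast intro: cong_sym cong_trans)
  hence "a + j * r = a + j' * r" using ap j by (simp add: cong_def)
  thus "j = j'" using r by simp
qed

lemma card_dlog_progression_image_eq: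
  assumes p: "prime p" and g: "residue_primroot p g" and r: "r > 0"
    and ap: "\<forall>j\<in>J. 0 < a + j * r \<and> a + j * r < p"
    and I: "\<And>y. y < p - 1 \<Longrightarrow> y \<in> I \<longleftrightarrow> P y"
  shows "card {x \<in> (\<lambda>j. dlog p g (a + j * r)) ` J. P x} = card {j\<in>J. dlog p g (a + j * r) \<in> I}"
proof -
  define f where "f = (\<lambda>j. dlog p g (a + j * r))"
  have "f j < p - 1" if "j \<in> J" for j
    using dlog_less_and_cong[OF p g] ap that by (simp add: f_def)
  hence "{x \<in> f ` J. P x} = f ` {j\<in>J. f j \<in> I}" using I by auto
  moreover have "inj_on f J" unfolding f_def by (rule inj_on_dlog_progression[OF p g r ap])
  hence "card (f ` {j\<in>J. f j \<in> I}) = card {j\<in>J. f j \<in> I}"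
    by (rule card_image[OF inj_on_subset]) auto
  ultimately show ?thesis by (simp add: f_def)
qed

lemma nat_interval_approx_real_interval:
  fixes u M :: real
  assumes u: "0 \<le> u" and M: "0 < M" and n: "u + M \<le> real n"
  obtains lo hi where "hi \<le> n" "\<bar>real (hi - lo) - M\<bar> \<le> 2"
    "\<And>y. y < n \<Longrightarrow> y \<in> {lo..<hi} \<longleftrightarrow> u \<le> real y \<and> real y \<le> u + M"
proof
  define lo where "lo = nat \<lceil>u\<rceil>"
  define hi where "hi = min (nat \<lfloor>u + M\<rfloor> + 1) n"
  show "hi \<le> n" by (simp add: hi_def)
  have lo: "u \<le> real lo" "real lo < u + 1" using u by (auto simp: lo_def) linarith+
  have hi: "real hi \<le> u + M + 1" "u + M - 1 < real hi" using u M n by (auto simp: hi_def) linarith+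
  show "\<bar>real (hi - lo) - M\<bar> \<le> 2"
    using lo hi M by (cases "lo \<le> hi") (auto simp: of_nat_diff)
  fix y :: nat assume "y < n"
  have lo_iff: "lo \<le> y \<longleftrightarrow> u \<le> real y" unfolding lo_def by (simp add: nat_le_iff ceiling_le_iff)
  have "y < nat \<lfloor>u + M\<rfloor> + 1 \<longleftrightarrow> int y \<le> \<lfloor>u + M\<rfloor>" using u M by linarith
  also have "\<dots> \<longleftrightarrow> real y \<le> u + M" by (simp add: le_floor_iff)
  finally show "y \<in> {lo..<hi} \<longleftrightarrow> u \<le> real y \<and> real y \<le> u + M"
    using lo_iff \<open>y < n\<close> by (auto simp: hi_def)
qed

lemma ln_error_factor_bounds:
  fixes x :: real
  assumes "3 \<le> x"
  shows "(3 + 2 * ln x) * (2 * (1 + ln x)) \<le> 20 * (ln x)\<^sup>2" and "1 \<le> sqrt x * (ln x)\<^sup>2"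
proof -
  have "1 \<le> ln (3 :: real)" using exp_le by (simp add: ln_ge_iff)
  also have "\<dots> \<le> ln x" using assms by simp
  finally have L: "1 \<le> ln x" .
  have "ln x \<le> (ln x)\<^sup>2" using L by (simp add: power2_eq_square mult_le_cancel_left1)
  moreover have "1 \<le> (ln x)\<^sup>2" using mult_mono[OF L L] L by (simp add: power2_eq_square)
  moreover have "(3 + 2 * ln x) * (2 * (1 + ln x)) = 6 + 10 * ln x + 4 * (ln x)\<^sup>2"
    by (simp add: algebra_simps power2_eq_square)
  ultimately show "(3 + 2 * ln x) * (2 * (1 + ln x)) \<le> 20 * (ln x)\<^sup>2" by linarith
  have "1 \<le> sqrt x" using assms by simp
  with \<open>1 \<le> (ln x)\<^sup>2\<close> show "1 \<le> sqrt x * (ln x)\<^sup>2" using mult_mono[of 1 "sqrt x" 1] by simp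
qed

lemma card_dlog_progression_real_interval_error:
  fixes a r N :: nat and u M :: real
  assumes p: "prime p" and p2: "p > 2" and g: "residue_primroot p g" and r: "r > 0" and N: "N > 0"
    and ap: "\<forall>j\<in>{1..N}. 1 \<le> a + j * r \<and> a + j * r \<le> p - 1"
    and u: "0 \<le> u" and M: "M > 0" and uM: "u + M \<le> real (p - 1)"
  shows "\<bar>real (card {x \<in> (\<lambda>j. dlog p g (a + j * r)) ` {1..N}. u \<le> real x \<and> real x \<le> u + M})
           - M * N / p\<bar> \<le> 22 * sqrt p * (ln p)\<^sup>2"
proof -
  define L where "L = ln (real p)"
  have pp: "real p > 0" and p3: "3 \<le> real p" using p2 by auto
  have ap': "\<forall>j\<in>{1..N}. 0 < a + j * r \<and> a + j * r < p"
  proof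
    fix j assume "j \<in> {1..N}"
    with ap have "1 \<le> a + j * r" "a + j * r \<le> p - 1" by blast+
    thus "0 < a + j * r \<and> a + j * r < p" using p2 by linarith
  qed
  have "a + N * r < p" using ap' N by simp
  moreover have "N \<le> N * r" "r \<le> N * r" using N r by simp_all
  ultimately have rp: "r < p" and Np: "real N \<le> real p" by linarith+
  obtain lo hi where hi: "hi \<le> p - 1" and card_I: "\<bar>real (hi - lo) - M\<bar> \<le> 2"
    and mem_I: "\<And>y. y < p - 1 \<Longrightarrow> y \<in> {lo..<hi} \<longleftrightarrow> u \<le> real y \<and> real y \<le> u + M"
    by (rule nat_interval_approx_real_interval[OF u M uM]) blast
  define K where "K = card {j\<in>{1..N}. dlog p g (a + j * r) \<in> {lo..<hi}}"
  have card_eq: "card {x \<in> (\<lambda>j. dlog p g (a + j * r)) ` {1..N}. u \<le> real x \<and> real x \<le> u + M} = K"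
    unfolding K_def by (rule card_dlog_progression_image_eq[OF p g r ap' mem_I])
  have "K - real (hi - lo) * N / p = (real p * K - real (hi - lo) * N) / p"
    using pp by (simp add: field_simps)
  hence "\<bar>K - real (hi - lo) * N / p\<bar> = \<bar>real p * K - real (hi - lo) * N\<bar> / p"
    using pp by simp
  also have "\<dots> \<le> sqrt p * (3 + 2 * L) * (2 * real p * (1 + L)) / p"
    using dlog_progression_interval_discrepancy[OF p p2 g r rp ap' hi, of lo]
    by (intro divide_right_mono) (simp_all add: K_def L_def)
  also have "\<dots> = sqrt p * ((3 + 2 * L) * (2 * (1 + L)))" using pp by simp
  also have "\<dots> \<le> sqrt p * (20 * L\<^sup>2)"
    using ln_error_factor_bounds(1)[OF p3] by (intro mult_left_mono) (simp_all add: L_def)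
  finally have main: "\<bar>K - real (hi - lo) * N / p\<bar> \<le> 20 * (sqrt p * L\<^sup>2)" by simp
  have "\<bar>real (hi - lo) * N / p - M * N / p\<bar> = \<bar>real (hi - lo) - M\<bar> * (N / p)"
    by (simp add: abs_mult flip: diff_divide_distrib left_diff_distrib times_divide_eq_right)
  also have "\<dots> \<le> 2 * 1" using card_I Np pp by (intro mult_mono) auto
  finally have "\<bar>real (hi - lo) * N / p - M * N / p\<bar> \<le> 2 * (sqrt p * L\<^sup>2)"
    using ln_error_factor_bounds(2)[OF p3] by (simp add: L_def)
  thus ?thesis using main card_eq by (simp add: L_def)
qed

theorem corollary1:
  "\<exists>c3 :: real. c3 > 0 \<and>
    (\<forall>(p::nat) (g::nat) (a::nat) (r::nat) (N::nat) (\<delta>::real) (u::real) (M::real).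
      prime p \<and> p > 2 \<and> residue_primroot p g \<and> r > 0 \<and> N > 0 \<and>
      (\<forall>j\<in>{1..N}. 1 \<le> a + j * r \<and> a + j * r \<le> p - 1) \<and>
      \<delta> > 0 \<and> M > 0 \<and> 0 \<le> u \<and> u + M \<le> real (p - 1) \<and>
      M * real N > c3 / \<delta> * real p powr (3/2) * (ln (real p))\<^sup>2
      \<longrightarrow>
      (let K = real (card {x \<in> (\<lambda>j. dlog p g (a + j * r)) ` {1..N}.
                              u \<le> real x \<and> real x \<le> u + M})
       in (1 - \<delta>) * (M * real N / real p) \<le> K \<and> K \<le> (1 + \<delta>) * (M * real N / real p)))"
proof (intro exI[of _ 22] conjI allI impI)
  fix p g a r N :: nat and \<delta> u M :: real
  assume H: "prime p \<and> p > 2 \<and> residue_primroot p g \<and> r > 0 \<and> N > 0 \<and>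
      (\<forall>j\<in>{1..N}. 1 \<le> a + j * r \<and> a + j * r \<le> p - 1) \<and>
      \<delta> > 0 \<and> M > 0 \<and> 0 \<le> u \<and> u + M \<le> real (p - 1) \<and>
      M * real N > 22 / \<delta> * real p powr (3/2) * (ln (real p))\<^sup>2"
  define K where "K = real (card {x \<in> (\<lambda>j. dlog p g (a + j * r)) ` {1..N}. u \<le> real x \<and> real x \<le> u + M})"
  define X where "X = M * N / p"
  define D where "D = sqrt p * (ln p)\<^sup>2"
  have "\<bar>K - X\<bar> \<le> 22 * sqrt p * (ln p)\<^sup>2"
    unfolding K_def X_def using H by (intro card_dlog_progression_real_interval_error) auto
  hence error: "\<bar>K - X\<bar> \<le> 22 * D" by (simp add: D_def mult.assoc)
  have "real p powr (3/2) = real p * sqrt p"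
  proof -
    have "real p powr (3/2) = real p powr (1 + 1/2)" by simp
    also have "\<dots> = real p * sqrt p" using H by (subst powr_add) (simp add: powr_half_sqrt)
    finally show ?thesis .
  qed
  hence "22 / \<delta> * (real p * D) < M * N" using H by (simp add: D_def mult.assoc)
  hence "22 * (real p * D) < \<delta> * (M * N)" using H by (simp add: field_simps)
  hence "22 * D < \<delta> * X" using H by (simp add: X_def field_simps)
  hence "(1 - \<delta>) * X \<le> K \<and> K \<le> (1 + \<delta>) * X" using error by (simp add: algebra_simps abs_le_iff)
  thus "let K = real (card {x \<in> (\<lambda>j. dlog p g (a + j * r)) ` {1..N}. u \<le> real x \<and> real x \<le> u + M})
       in (1 - \<delta>) * (M * real N / real p) \<le> K \<and> K \<le> (1 + \<delta>) * (M * real N / real p)"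
    by (simp add: Let_def K_def X_def)
qed simp

end
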